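(* Let $f:\mathbb R^n\to\mathbb R\cup\{+\infty\}$, $g:\mathbb R^m\to\mathbb R\cup\{+\infty\}$, $h:\mathbb R^n\to\mathbb R\cup\{+\infty\}$ be closed convex functions, where $h$ is differentiable on its domain $\operatorname{dom} h$, which is an open convex set, and $f+h$ and $g$ are proper. Let $A\in\mathbb R^{m\times n}$. Let $X\subseteq\mathbb R^n$ and $Z\subseteq\mathbb R^m$ be compact convex sets, and suppose the primal problem $\text{minimize } f(x)+g(Ax)+h(x)$ has an optimal solution $x^\star\in\operatorname{int}(X)$ and the dual problem $\text{maximize } -(f+h)^*(-A^Tz)-g^*(z)$ has an optimal solution $z^\star\in\operatorname{int}(Z)$. Define, for $x\in\operatorname{dom}(f+h)$ and $z\in\operatorname{dom} g^*$, \[\eta(x,z)=\sup_{z'\in Z}\mathcal L(x,z')-\inf_{x'\in X}\mathcal L(x',z).\] Then $\eta(x,z)\ge 0$ for all $x\in\operatorname{dom}(f+h)$ and $z\in\operatorname{dom} g^*$, and $\eta(x,z)=0$ only if $x$ is optimal for the primal problem and $z$ is optimal for the dual problem.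
   Context: $g^*$ and $(f+h)^*$ denote convex conjugates. The Lagrangian is $\mathcal L(x,z)=f(x)+h(x)+\langle z,Ax\rangle-g^*(z)$, with the convention $\mathcal L(x,z)=+\infty$ if $x\notin\operatorname{dom}(f+h)$ and $\mathcal L(x,z)=-\infty$ if $x\in\operatorname{dom}(f+h)$ and $z\notin\operatorname{dom} g^*$. It is a standing assumption that the primal--dual optimality conditions $0\in\partial f(x)+\nabla h(x)+A^Tz$, $0\in\partial g^*(z)-Ax$ have a solution. *)

theory Defs
  imports "HOL-Analysis.Analysis"
begin

definition edom :: "('a \<Rightarrow> ereal) \<Rightarrow> 'a set" where
  "edom F = {x. F x < \<infinity>}"

definition epigraph :: "('a \<Rightarrow> ereal) \<Rightarrow> ('a \<times> real) set" where
  "epigraph F = {(x, r). F x \<le> ereal r}"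

definition convex_fun :: "('a::real_vector \<Rightarrow> ereal) \<Rightarrow> bool" where
  "convex_fun F \<longleftrightarrow> convex (epigraph F)"

definition closed_fun :: "('a::topological_space \<Rightarrow> ereal) \<Rightarrow> bool" where
  "closed_fun F \<longleftrightarrow> closed (epigraph F)"

definition proper_fun :: "('a \<Rightarrow> ereal) \<Rightarrow> bool" where
  "proper_fun F \<longleftrightarrow> (\<forall>x. F x \<noteq> -\<infinity>) \<and> (\<exists>x. F x < \<infinity>)"

definition conj_fun :: "('a::real_inner \<Rightarrow> ereal) \<Rightarrow> 'a \<Rightarrow> ereal" where
  "conj_fun F y = (SUP x. ereal (y \<bullet> x) - F x)"

definition subdiff :: "('a::real_inner \<Rightarrow> ereal) \<Rightarrow> 'a \<Rightarrow> 'a set" where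
  "subdiff F x = {v. \<bar>F x\<bar> \<noteq> \<infinity> \<and> (\<forall>y. F x + ereal (v \<bullet> (y - x)) \<le> F y)}"

definition lagrangian ::
  "(real^'n \<Rightarrow> ereal) \<Rightarrow> (real^'m \<Rightarrow> ereal) \<Rightarrow> (real^'n \<Rightarrow> ereal) \<Rightarrow> real^'n^'m
     \<Rightarrow> real^'n \<Rightarrow> real^'m \<Rightarrow> ereal" where
  "lagrangian f g h A x z =
     (if x \<notin> edom (\<lambda>y. f y + h y) then \<infinity>
      else if z \<notin> edom (conj_fun g) then -\<infinity>
      else f x + h x + ereal (z \<bullet> (A *v x)) - conj_fun g z)"

definition primal_obj ::
  "(real^'n \<Rightarrow> ereal) \<Rightarrow> (real^'m \<Rightarrow> ereal) \<Rightarrow> (real^'n \<Rightarrow> ereal) \<Rightarrow> real^'n^'m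
     \<Rightarrow> real^'n \<Rightarrow> ereal" where
  "primal_obj f g h A x = f x + g (A *v x) + h x"

definition dual_obj ::
  "(real^'n \<Rightarrow> ereal) \<Rightarrow> (real^'m \<Rightarrow> ereal) \<Rightarrow> (real^'n \<Rightarrow> ereal) \<Rightarrow> real^'n^'m
     \<Rightarrow> real^'m \<Rightarrow> ereal" where
  "dual_obj f g h A z =
     - conj_fun (\<lambda>y. f y + h y) (- (transpose A *v z)) - conj_fun g z"

definition primal_optimal where
  "primal_optimal f g h A x \<longleftrightarrow>
     primal_obj f g h A x < \<infinity> \<and> (\<forall>y. primal_obj f g h A x \<le> primal_obj f g h A y)"

definition dual_optimal where
  "dual_optimal f g h A z \<longleftrightarrow>
     dual_obj f g h A z > -\<infinity> \<and> (\<forall>w. dual_obj f g h A w \<le> dual_obj f g h A z)"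

definition gap_eta where
  "gap_eta f g h A X Z x z =
     (SUP z'\<in>Z. lagrangian f g h A x z') - (INF x'\<in>X. lagrangian f g h A x' z)"

end

theory Submission
  imports Defs
begin

text \<open>
  By the conventions on infinite values, the Lagrangian is
  \<open>L x z = (f + h) x + z \<bullet> A x - g\<^sup>* z\<close> in the arithmetic of \<open>ereal\<close>, where \<open>\<infinity> - \<infinity> = \<infinity>\<close>.
  The Fenchel--Moreau theorem \<open>g\<^sup>*\<^sup>* = g\<close> turns the primal objective into \<open>SUP z. L x z\<close>,
  and the definition of \<open>(f + h)\<^sup>*\<close> turns the dual objective into \<open>INF x. L x z\<close>. The KKT point
  is a saddle point of \<open>L\<close>, so strong duality holds, and for all \<open>x\<close>, \<open>z\<close>
  \<open>SUP z'\<in>Z. L x z' \<ge> L x z\<^sup>\<star> \<ge> dual z\<^sup>\<star> \<ge> primal x\<^sup>\<star> \<ge> L x\<^sup>\<star> z \<ge> INF x'\<in>X. L x' z\<close>.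
  If the gap vanishes the chain collapses: \<open>z\<^sup>\<star>\<close> maximises the concave function \<open>L x\<close> on the
  neighbourhood \<open>Z\<close> of \<open>z\<^sup>\<star>\<close>, hence everywhere, so \<open>primal x = L x z\<^sup>\<star> = primal x\<^sup>\<star>\<close>;
  symmetrically for \<open>z\<close>.
\<close>

section \<open>Convex extended-real functions\<close>

lemma convex_funD:
  assumes "convex_fun F" "F u \<le> ereal p" "F v \<le> ereal q" "0 \<le> t" "t \<le> 1"
  shows "F ((1 - t) *\<^sub>R u + t *\<^sub>R v) \<le> ereal ((1 - t) * p + t * q)"
proof -
  have "(u, p) \<in> epigraph F" "(v, q) \<in> epigraph F"
    using assms(2,3) by (auto simp: epigraph_def)
  then have "(1 - t) *\<^sub>R (u, p) + t *\<^sub>R (v, q) \<in> epigraph F"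
    using assms(1,4,5) unfolding convex_fun_def convex_alt by blast
  then show ?thesis by (simp add: epigraph_def)
qed

lemma convex_funI:
  assumes "\<And>u v p q t. F u \<le> ereal p \<Longrightarrow> F v \<le> ereal q \<Longrightarrow> 0 \<le> t \<Longrightarrow> t \<le> 1 \<Longrightarrow>
             F ((1 - t) *\<^sub>R u + t *\<^sub>R v) \<le> ereal ((1 - t) * p + t * q)"
  shows "convex_fun F"
  using assms by (auto simp: convex_fun_def convex_alt epigraph_def)

lemma ereal_add_le_realE:
  fixes a b :: ereal
  assumes "a + b \<le> ereal p"
  obtains r s where "a \<le> ereal r" "b \<le> ereal s" "r + s = p"
proof -
  have "a \<noteq> \<infinity>" "b \<noteq> \<infinity>" using assms by auto
  then show thesis
    using assms that[of "real_of_ereal a" "p - real_of_ereal a"]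
      that[of "p - real_of_ereal b" "real_of_ereal b"]
    by (cases a; cases b) auto
qed

lemma convex_fun_add:
  assumes "convex_fun f" "convex_fun g"
  shows "convex_fun (\<lambda>x. f x + g x)"
proof (rule convex_funI)
  fix u v p q and t :: real
  assume u: "f u + g u \<le> ereal p" and v: "f v + g v \<le> ereal q" and t: "0 \<le> t" "t \<le> 1"
  obtain p1 p2 where p: "f u \<le> ereal p1" "g u \<le> ereal p2" "p1 + p2 = p"
    using u by (rule ereal_add_le_realE)
  obtain q1 q2 where q: "f v \<le> ereal q1" "g v \<le> ereal q2" "q1 + q2 = q"
    using v by (rule ereal_add_le_realE)
  have "f ((1 - t) *\<^sub>R u + t *\<^sub>R v) + g ((1 - t) *\<^sub>R u + t *\<^sub>R v)
      \<le> ereal ((1 - t) * p1 + t * q1) + ereal ((1 - t) * p2 + t * q2)"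
    using p q t by (intro add_mono convex_funD[OF assms(1)] convex_funD[OF assms(2)])
  also have "\<dots> = ereal ((1 - t) * p + t * q)"
    unfolding p(3)[symmetric] q(3)[symmetric] by (simp add: algebra_simps)
  finally show "f ((1 - t) *\<^sub>R u + t *\<^sub>R v) + g ((1 - t) *\<^sub>R u + t *\<^sub>R v)
      \<le> ereal ((1 - t) * p + t * q)" .
qed

lemma convex_fun_affine: "convex_fun (\<lambda>x. ereal (a \<bullet> x) + c)"
proof (rule convex_funI)
  fix u v p q and t :: real
  assume u: "ereal (a \<bullet> u) + c \<le> ereal p" and v: "ereal (a \<bullet> v) + c \<le> ereal q"
    and t: "0 \<le> t" "t \<le> 1"
  show "ereal (a \<bullet> ((1 - t) *\<^sub>R u + t *\<^sub>R v)) + c \<le> ereal ((1 - t) * p + t * q)"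
  proof (cases c)
    case (real r)
    have "(1 - t) * (a \<bullet> u + r) + t * (a \<bullet> v + r) \<le> (1 - t) * p + t * q"
      using u v t real by (intro add_mono mult_left_mono) auto
    then show ?thesis using real by (simp add: inner_add_right algebra_simps)
  qed (use u in auto)
qed

lemma convex_fun_SUP:
  assumes "\<And>i. i \<in> I \<Longrightarrow> convex_fun (F i)"
  shows "convex_fun (\<lambda>x. SUP i\<in>I. F i x)"
proof -
  have "epigraph (\<lambda>x. SUP i\<in>I. F i x) = (\<Inter>i\<in>I. epigraph (F i))"
    by (auto simp: epigraph_def SUP_le_iff)
  then show ?thesis
    using assms by (auto simp: convex_fun_def intro: convex_INT)
qed

lemma interior_imp_segment_pointE:
  fixes p y :: "'a::real_normed_vector"
  assumes "p \<in> interior X"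
  obtains t where "0 < t" "t \<le> 1" "(1 - t) *\<^sub>R p + t *\<^sub>R y \<in> X"
proof -
  obtain e where e: "e > 0" "ball p e \<subseteq> X"
    using assms by (meson mem_interior)
  define t where "t = min 1 (e / (norm (y - p) + 1))"
  have pos: "norm (y - p) + 1 > 0" using norm_ge_zero[of "y - p"] by linarith
  then have t: "0 < t" "t \<le> 1" using e by (auto simp: t_def)
  have "t * norm (y - p) \<le> e / (norm (y - p) + 1) * norm (y - p)"
    by (intro mult_right_mono) (auto simp: t_def)
  also have "\<dots> < e" using e pos by (simp add: field_simps)
  finally have "dist p ((1 - t) *\<^sub>R p + t *\<^sub>R y) < e"
    using t by (simp add: dist_norm algebra_simps norm_minus_commute flip: scaleR_diff_right)
  then show thesis using e t that by auto
qed

lemma convex_fun_interior_min_imp_min: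
  fixes \<phi> :: "'a::real_normed_vector \<Rightarrow> ereal"
  assumes conv: "convex_fun \<phi>" and p: "p \<in> interior X" "\<phi> p < \<infinity>"
    and min: "\<And>u. u \<in> X \<Longrightarrow> \<phi> p \<le> \<phi> u"
  shows "\<phi> p \<le> \<phi> y"
proof (rule ereal_le_real)
  fix b assume b: "\<phi> y \<le> ereal b"
  show "\<phi> p \<le> ereal b"
  proof (cases "\<phi> p")
    case (real a)
    obtain t where t: "0 < t" "t \<le> 1" "(1 - t) *\<^sub>R p + t *\<^sub>R y \<in> X"
      using p(1) by (rule interior_imp_segment_pointE)
    have "ereal a \<le> \<phi> ((1 - t) *\<^sub>R p + t *\<^sub>R y)"
      using min[OF t(3)] real by simp
    also have "\<dots> \<le> ereal ((1 - t) * a + t * b)"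
      using real b t by (intro convex_funD[OF conv]) auto
    finally have "t * a \<le> t * b" by (simp add: algebra_simps)
    then show ?thesis using real t by simp
  qed (use p(2) in auto)
qed

section \<open>Subgradients and conjugates\<close>

lemma subdiff_add:
  assumes "u \<in> subdiff f x" "v \<in> subdiff g x"
  shows "u + v \<in> subdiff (\<lambda>y. f y + g y) x"
proof -
  obtain a b where ab: "f x = ereal a" "g x = ereal b"
    using assms by (auto simp: subdiff_def abs_neq_infinity_cases)
  have "f x + g x + ereal ((u + v) \<bullet> (y - x)) \<le> f y + g y" for y
  proof -
    have "f x + ereal (u \<bullet> (y - x)) + (g x + ereal (v \<bullet> (y - x))) \<le> f y + g y"
      using assms by (intro add_mono) (auto simp: subdiff_def)
    then show ?thesis using ab by (simp add: inner_add_left ac_simps)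
  qed
  then show ?thesis using ab by (simp add: subdiff_def)
qed

lemma convex_segment_above_tangent:
  fixes \<phi> :: "'a::real_inner \<Rightarrow> real"
  assumes conv: "\<And>t. 0 \<le> t \<Longrightarrow> t \<le> 1 \<Longrightarrow>
      \<phi> ((1 - t) *\<^sub>R x + t *\<^sub>R y) \<le> (1 - t) * \<phi> x + t * \<phi> y"
    and der: "(\<phi> has_derivative (\<lambda>v. d \<bullet> v)) (at x)"
  shows "\<phi> x + d \<bullet> (y - x) \<le> \<phi> y"
proof (rule ccontr)
  define \<delta> where "\<delta> = \<phi> x + d \<bullet> (y - x) - \<phi> y"
  define v where "v = y - x"
  assume "\<not> \<phi> x + d \<bullet> (y - x) \<le> \<phi> y"
  then have \<delta>: "\<delta> > 0" by (simp add: \<delta>_def)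
  then have v: "norm v > 0" by (auto simp: \<delta>_def v_def)
  define e where "e = \<delta> / (2 * norm v)"
  have "e > 0" using \<delta> v by (simp add: e_def)
  then obtain r where r: "r > 0"
    "\<And>z. norm (z - x) < r \<Longrightarrow> norm (\<phi> z - \<phi> x - d \<bullet> (z - x)) \<le> e * norm (z - x)"
    using der unfolding has_derivative_at_alt by meson
  define t where "t = min 1 (r / (2 * norm v))"
  have t: "0 < t" "t \<le> 1" using r v by (auto simp: t_def)
  have "t * norm v \<le> r / 2" using v by (simp add: t_def min_def field_simps)
  then have close: "norm ((x + t *\<^sub>R v) - x) < r" using t r by simp
  have "\<phi> (x + t *\<^sub>R v) \<le> (1 - t) * \<phi> x + t * \<phi> y"
    using conv[of t] t by (simp add: v_def algebra_simps)
  then have "\<phi> (x + t *\<^sub>R v) - \<phi> x - d \<bullet> (t *\<^sub>R v) \<le> - t * \<delta>"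
    by (simp add: \<delta>_def v_def algebra_simps)
  moreover have "norm (\<phi> (x + t *\<^sub>R v) - \<phi> x - d \<bullet> (t *\<^sub>R v)) \<le> t * \<delta> / 2"
    using r(2)[OF close] t v by (simp add: e_def field_simps)
  ultimately have "t * \<delta> \<le> t * \<delta> / 2" unfolding real_norm_def by linarith
  then show False using t \<delta> by simp
qed

lemma convex_fun_has_derivative_imp_subdiff:
  fixes h :: "'a::real_inner \<Rightarrow> ereal"
  assumes conv: "convex_fun h" and fin: "\<And>y. h y \<noteq> -\<infinity>" "h x < \<infinity>"
    and der: "((\<lambda>y. real_of_ereal (h y)) has_derivative (\<lambda>v. d \<bullet> v)) (at x)"
  shows "d \<in> subdiff h x"
proof -
  obtain a where a: "h x = ereal a" using fin by (cases "h x") auto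
  have "h x + ereal (d \<bullet> (y - x)) \<le> h y" for y
  proof (cases "h y")
    case (real b)
    have "real_of_ereal (h x) + d \<bullet> (y - x) \<le> real_of_ereal (h y)"
    proof (rule convex_segment_above_tangent[OF _ der])
      fix t :: real assume t: "0 \<le> t" "t \<le> 1"
      have "h ((1 - t) *\<^sub>R x + t *\<^sub>R y) \<le> ereal ((1 - t) * a + t * b)"
        using a real t by (intro convex_funD[OF conv]) auto
      then show "real_of_ereal (h ((1 - t) *\<^sub>R x + t *\<^sub>R y))
          \<le> (1 - t) * real_of_ereal (h x) + t * real_of_ereal (h y)"
        using fin(1)[of "(1 - t) *\<^sub>R x + t *\<^sub>R y"] a real
        by (cases "h ((1 - t) *\<^sub>R x + t *\<^sub>R y)") auto
    qed
    then show ?thesis using a real by simp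
  qed (use fin in auto)
  then show ?thesis using a by (simp add: subdiff_def)
qed

lemma proper_funE:
  assumes "proper_fun F"
  obtains u r where "F u = ereal r"
proof -
  obtain u where "F u < \<infinity>" "F u \<noteq> -\<infinity>"
    using assms by (auto simp: proper_fun_def)
  then show thesis using that by (cases "F u") auto
qed

lemma conj_fun_upper: "ereal (w \<bullet> u) - F u \<le> conj_fun F w"
  unfolding conj_fun_def by (rule SUP_upper) simp

lemma conj_fun_le:
  assumes "\<And>u r. F u = ereal r \<Longrightarrow> w \<bullet> u - r \<le> K" "\<And>u. F u \<noteq> -\<infinity>"
  shows "conj_fun F w \<le> ereal K"
  unfolding conj_fun_def
proof (rule SUP_least)
  fix u
  show "ereal (w \<bullet> u) - F u \<le> ereal K"
    using assms(1)[of u] assms(2)[of u] by (cases "F u") auto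
qed

lemma conj_fun_neq_minf:
  assumes "proper_fun F"
  shows "conj_fun F w \<noteq> -\<infinity>"
proof -
  obtain u r where "F u = ereal r"
    using assms by (rule proper_funE)
  then show ?thesis using conj_fun_upper[of w u F] by auto
qed

lemma convex_fun_conj_fun: "convex_fun (conj_fun F)"
proof -
  have eq: "conj_fun F = (\<lambda>w. SUP u. ereal (u \<bullet> w) + - F u)"
    unfolding conj_fun_def minus_ereal_def by (subst inner_commute) (rule refl)
  show ?thesis
    unfolding eq by (rule convex_fun_SUP) (rule convex_fun_affine)
qed

lemma conj_fun_subdiff_eq:
  assumes "v \<in> subdiff F x"
  shows "conj_fun F v = ereal (v \<bullet> x) - F x"
proof (rule antisym[OF _ conj_fun_upper])
  obtain a where a: "F x = ereal a"
    using assms by (auto simp: subdiff_def abs_neq_infinity_cases)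
  show "conj_fun F v \<le> ereal (v \<bullet> x) - F x"
    unfolding conj_fun_def
  proof (rule SUP_least)
    fix y
    have "F x + ereal (v \<bullet> (y - x)) \<le> F y" using assms by (simp add: subdiff_def)
    then show "ereal (v \<bullet> y) - F y \<le> ereal (v \<bullet> x) - F x"
      using a by (cases "F y") (auto simp: inner_diff_right)
  qed
qed

section \<open>The Fenchel--Moreau theorem\<close>

lemma closed_convex_fun_separation:
  fixes g :: "'a::euclidean_space \<Rightarrow> ereal"
  assumes cl: "closed_fun g" and cv: "convex_fun g" and pr: "proper_fun g"
    and less: "ereal \<alpha> < g y"
  shows "(\<exists>w. ereal \<alpha> < ereal (w \<bullet> y) - conj_fun g w)
    \<or> (\<exists>a c. a \<bullet> y < c \<and> (\<forall>u. g u < \<infinity> \<longrightarrow> c < a \<bullet> u))"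
proof -
  have ninf: "\<And>u. g u \<noteq> -\<infinity>" using pr by (auto simp: proper_fun_def)
  have y_out: "(y, \<alpha>) \<notin> epigraph g" using less by (auto simp: epigraph_def)
  obtain ab c where sep: "ab \<bullet> (y, \<alpha>) < c" "\<forall>p\<in>epigraph g. c < ab \<bullet> p"
    using separating_hyperplane_closed_point[OF _ _ y_out] cl cv
    by (auto simp: closed_fun_def convex_fun_def)
  obtain a b where ab: "ab = (a, b)" by (cases ab)
  have sep_y: "a \<bullet> y + b * \<alpha> < c" using sep ab by simp
  have sep_epi: "\<And>u r. g u \<le> ereal r \<Longrightarrow> c < a \<bullet> u + b * r"
    using sep ab by (auto simp: epigraph_def)
  obtain u0 r0 where r0: "g u0 = ereal r0"
    using pr by (rule proper_funE)
  have "b \<ge> 0"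
  proof (rule ccontr)
    assume "\<not> b \<ge> 0"
    then have b: "b < 0" by simp
    define r where "r = max r0 ((c - a \<bullet> u0) / b)"
    have "c < a \<bullet> u0 + b * r" using r0 by (intro sep_epi) (simp add: r_def)
    moreover have "b * r \<le> b * ((c - a \<bullet> u0) / b)"
      using b by (intro mult_left_mono_neg) (auto simp: r_def)
    ultimately show False using b by simp
  qed
  \<comment> \<open>If \<open>b = 0\<close> the hyperplane is vertical and separates \<open>y\<close> from the domain of \<open>g\<close>;
    otherwise it is the graph of an affine minorant of \<open>g\<close> exceeding \<open>\<alpha>\<close> at \<open>y\<close>.\<close>
  show ?thesis
  proof (cases "b = 0")
    case True
    have "c < a \<bullet> u" if "g u < \<infinity>" for u
      using that ninf[of u] sep_epi[of u "real_of_ereal (g u)"] True by (cases "g u") auto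
    then show ?thesis using sep_y True by auto
  next
    case False
    with \<open>b \<ge> 0\<close> have b: "b > 0" by simp
    define w where "w = (- (1 / b)) *\<^sub>R a"
    have "conj_fun g w \<le> ereal (- c / b)"
    proof (rule conj_fun_le[OF _ ninf])
      fix u r assume "g u = ereal r"
      then have "c / b \<le> (a \<bullet> u + b * r) / b"
        using b sep_epi[of u r] by (intro divide_right_mono) auto
      moreover have "w \<bullet> u - r = - ((a \<bullet> u + b * r) / b)"
        using b by (simp add: w_def field_simps)
      ultimately show "w \<bullet> u - r \<le> - c / b" by simp
    qed
    then have "ereal (w \<bullet> y + c / b) \<le> ereal (w \<bullet> y) - conj_fun g w"
      by (cases "conj_fun g w") auto
    moreover have "\<alpha> < w \<bullet> y + c / b" using sep_y b by (simp add: w_def field_simps)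
    ultimately show ?thesis by (meson less_ereal.simps(1) order_less_le_trans)
  qed
qed

lemma proper_fun_conj_fun:
  fixes g :: "'a::euclidean_space \<Rightarrow> ereal"
  assumes "closed_fun g" "convex_fun g" "proper_fun g"
  shows "proper_fun (conj_fun g)"
proof -
  obtain u0 r0 where r0: "g u0 = ereal r0"
    using assms(3) by (rule proper_funE)
  then have "g u0 < \<infinity>" by simp
  then have "\<not> (\<exists>a c. a \<bullet> u0 < c \<and> (\<forall>u. g u < \<infinity> \<longrightarrow> c < a \<bullet> u))"
    by (meson less_asym)
  moreover have "ereal (r0 - 1) < g u0" using r0 by simp
  ultimately obtain w where "ereal (r0 - 1) < ereal (w \<bullet> u0) - conj_fun g w"
    using closed_convex_fun_separation[OF assms] by blast
  then have "conj_fun g w < \<infinity>" by (cases "conj_fun g w") auto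
  then show ?thesis using conj_fun_neq_minf[OF assms(3)] by (auto simp: proper_fun_def)
qed

text \<open>If \<open>y\<close> is strictly separated from the domain of \<open>g\<close>, tilting a finite affine minorant of
  \<open>g\<close> along the separating direction pushes its value at \<open>y\<close> above any given level.\<close>

lemma conj_fun_minorant_above:
  fixes g :: "'a::euclidean_space \<Rightarrow> ereal"
  assumes cl: "closed_fun g" and cv: "convex_fun g" and pr: "proper_fun g"
    and less: "ereal \<alpha> < g y"
  shows "\<exists>w. ereal \<alpha> < ereal (w \<bullet> y) - conj_fun g w"
  using closed_convex_fun_separation[OF assms]
proof
  assume "\<exists>w. ereal \<alpha> < ereal (w \<bullet> y) - conj_fun g w"
  then show ?thesis .
next
  assume "\<exists>a c. a \<bullet> y < c \<and> (\<forall>u. g u < \<infinity> \<longrightarrow> c < a \<bullet> u)"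
  then obtain a c where ac: "a \<bullet> y < c" "\<And>u. g u < \<infinity> \<Longrightarrow> c < a \<bullet> u" by blast
  obtain w0 G0 where G0: "conj_fun g w0 = ereal G0"
    using proper_fun_conj_fun[OF cl cv pr] by (rule proper_funE)
  define k where "k = max 0 ((\<alpha> + 1 - w0 \<bullet> y + G0) / (c - a \<bullet> y))"
  have "(\<alpha> + 1 - w0 \<bullet> y + G0) / (c - a \<bullet> y) \<le> k" by (simp add: k_def)
  then have k_big: "\<alpha> + 1 - w0 \<bullet> y + G0 \<le> k * (c - a \<bullet> y)"
    using ac(1) by (simp add: pos_divide_le_eq)
  define w where "w = w0 - k *\<^sub>R a"
  have "conj_fun g w \<le> ereal (G0 - k * c)"
  proof (rule conj_fun_le)
    fix u r assume ur: "g u = ereal r"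
    have "w0 \<bullet> u - r \<le> G0" using conj_fun_upper[of w0 u g] ur G0 by simp
    moreover have "k * c \<le> k * (a \<bullet> u)"
      using ac(2)[of u] ur by (intro mult_left_mono) (auto simp: k_def)
    ultimately show "w \<bullet> u - r \<le> G0 - k * c" by (simp add: w_def inner_diff_left)
  qed (use pr in \<open>auto simp: proper_fun_def\<close>)
  then have "ereal (w \<bullet> y - (G0 - k * c)) \<le> ereal (w \<bullet> y) - conj_fun g w"
    by (cases "conj_fun g w") auto
  moreover have "\<alpha> < w \<bullet> y - (G0 - k * c)"
    using k_big by (simp add: w_def inner_diff_left algebra_simps)
  ultimately show ?thesis by (meson less_ereal.simps(1) order_less_le_trans)
qed

theorem fenchel_moreau:
  fixes g :: "'a::euclidean_space \<Rightarrow> ereal"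
  assumes "closed_fun g" "convex_fun g" "proper_fun g"
  shows "conj_fun (conj_fun g) = g"
proof (rule ext, rule antisym)
  fix y
  show "conj_fun (conj_fun g) y \<le> g y"
    unfolding conj_fun_def[of "conj_fun g"]
  proof (rule SUP_least)
    fix w
    have "g y \<noteq> -\<infinity>" using assms(3) by (simp add: proper_fun_def)
    then show "ereal (y \<bullet> w) - conj_fun g w \<le> g y"
      using conj_fun_upper[of w y g] by (cases "g y"; cases "conj_fun g w") (auto simp: inner_commute)
  qed
  show "g y \<le> conj_fun (conj_fun g) y"
  proof (rule ccontr)
    assume "\<not> g y \<le> conj_fun (conj_fun g) y"
    then obtain \<alpha> where \<alpha>: "conj_fun (conj_fun g) y < ereal \<alpha>" "ereal \<alpha> < g y"
      using ereal_dense2 by (meson not_le)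
    obtain w where "ereal \<alpha> < ereal (w \<bullet> y) - conj_fun g w"
      using conj_fun_minorant_above[OF assms \<alpha>(2)] by blast
    also have "\<dots> \<le> conj_fun (conj_fun g) y"
      using conj_fun_upper[of y w "conj_fun g"] by (simp add: inner_commute)
    finally show False using \<alpha>(1) by simp
  qed
qed

section \<open>Saddle functions\<close>

lemma saddle_point_strong_duality:
  fixes L :: "'a \<Rightarrow> 'b \<Rightarrow> 'c::complete_lattice"
  assumes saddle: "\<And>z. L x0 z \<le> L x0 z0" "\<And>x. L x0 z0 \<le> L x z0"
    and xs: "\<And>y. (SUP z. L xs z) \<le> (SUP z. L y z)"
    and zs: "\<And>w. (INF x. L x w) \<le> (INF x. L x zs)"
  shows "(SUP z. L xs z) \<le> (INF x. L x zs)"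
proof -
  have "(SUP z. L xs z) \<le> (SUP z. L x0 z)" by (rule xs)
  also have "\<dots> \<le> L x0 z0" by (rule SUP_least) (rule saddle(1))
  also have "\<dots> \<le> (INF x. L x z0)" by (rule INF_greatest) (rule saddle(2))
  also have "\<dots> \<le> (INF x. L x zs)" by (rule zs)
  finally show ?thesis .
qed

lemma minimax_gap_bounds:
  fixes L :: "'a \<Rightarrow> 'b \<Rightarrow> 'c::complete_lattice"
  assumes strong: "(SUP z. L xs z) \<le> (INF x. L x zs)" and "xs \<in> X" "zs \<in> Z"
  shows "(INF x'\<in>X. L x' z) \<le> L xs z" "L xs z \<le> L x zs" "L x zs \<le> (SUP z'\<in>Z. L x z')"
proof -
  show "(INF x'\<in>X. L x' z) \<le> L xs z" using \<open>xs \<in> X\<close> by (rule INF_lower)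
  have "L xs z \<le> (SUP z. L xs z)" by (rule SUP_upper) simp
  also note strong
  also have "(INF x. L x zs) \<le> L x zs" by (rule INF_lower) simp
  finally show "L xs z \<le> L x zs" .
  show "L x zs \<le> (SUP z'\<in>Z. L x z')" using \<open>zs \<in> Z\<close> by (rule SUP_upper)
qed

lemma minimax_gap_nonneg:
  fixes L :: "'a \<Rightarrow> 'b \<Rightarrow> ereal"
  assumes "(SUP z. L xs z) \<le> (INF x. L x zs)" "xs \<in> X" "zs \<in> Z"
  shows "0 \<le> (SUP z'\<in>Z. L x z') - (INF x'\<in>X. L x' z)"
  using minimax_gap_bounds[OF assms] by (intro ereal_diff_positive) (meson order_trans)

lemma minimax_gap_zero_imp_optimal:
  fixes L :: "'a::real_normed_vector \<Rightarrow> 'b::real_normed_vector \<Rightarrow> ereal"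
  assumes strong: "(SUP z. L xs z) \<le> (INF x. L x zs)"
    and xs: "xs \<in> interior X" and zs: "zs \<in> interior Z"
    and conv_x: "convex_fun (\<lambda>x'. L x' z)" and conv_z: "convex_fun (\<lambda>z'. - L x z')"
    and gap: "(SUP z'\<in>Z. L x z') - (INF x'\<in>X. L x' z) = 0"
  shows "(SUP z'. L x z') \<le> (SUP z'. L xs z')" "(INF x'. L x' zs) \<le> (INF x'. L x' z)"
proof -
  let ?S = "SUP z'\<in>Z. L x z'" and ?I = "INF x'\<in>X. L x' z"
  have "xs \<in> X" "zs \<in> Z" using xs zs interior_subset by blast+
  then have bounds: "?I \<le> L xs z" "L xs z \<le> L x zs" "L x zs \<le> ?S"
    by (rule minimax_gap_bounds[OF strong])+
  have "?S = ?I \<and> \<bar>?S\<bar> \<noteq> \<infinity>"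
    using gap by (cases ?S; cases ?I) auto
  then have eq: "?S = ?I" and fin: "\<bar>?S\<bar> \<noteq> \<infinity>" by auto
  have "?S \<le> L xs z" using eq bounds(1) by simp
  then have zs_val: "L x zs = ?S" and xs_val: "L xs z = ?S"
    using bounds(2,3) by (meson antisym order_trans)+
  have "- L x zs \<le> - L x z'" for z'
  proof (rule convex_fun_interior_min_imp_min[OF conv_z zs])
    show "- L x zs < \<infinity>" using zs_val fin by auto
    show "- L x zs \<le> - L x u" if "u \<in> Z" for u
      using SUP_upper[OF that, of "L x"] zs_val by simp
  qed
  then have "L x z' \<le> L x zs" for z' by simp
  then have "(SUP z'. L x z') \<le> L x zs" by (rule SUP_least)
  also have "\<dots> = L xs z" using zs_val xs_val by simp
  also have "\<dots> \<le> (SUP z'. L xs z')" by (rule SUP_upper) simp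
  finally show "(SUP z'. L x z') \<le> (SUP z'. L xs z')" .
  have xs_min: "L xs z \<le> L x' z" for x'
  proof (rule convex_fun_interior_min_imp_min[OF conv_x xs])
    show "L xs z < \<infinity>" using xs_val fin by auto
    show "L xs z \<le> L u z" if "u \<in> X" for u
      using INF_lower[OF that, of "\<lambda>x'. L x' z"] xs_val eq by simp
  qed
  have "(INF x'. L x' zs) \<le> L x zs" by (rule INF_lower) simp
  also have "\<dots> = L xs z" using zs_val xs_val by simp
  also have "\<dots> \<le> (INF x'. L x' z)" by (rule INF_greatest) (rule xs_min)
  finally show "(INF x'. L x' zs) \<le> (INF x'. L x' z)" .
qed

section \<open>The Lagrangian\<close>

lemma lagrangian_eq:
  "lagrangian f g h A x z = f x + h x + ereal (z \<bullet> (A *v x)) - conj_fun g z"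
  by (cases "f x"; cases "h x"; cases "conj_fun g z") (auto simp: lagrangian_def edom_def)

lemma primal_obj_eq_SUP_lagrangian:
  assumes "closed_fun g" "convex_fun g" "proper_fun g" and "proper_fun (\<lambda>x. f x + h x)"
  shows "primal_obj f g h A x = (SUP z. lagrangian f g h A x z)"
proof -
  have "f x + h x \<noteq> -\<infinity>" using assms(4) by (simp add: proper_fun_def)
  have "(SUP z. lagrangian f g h A x z)
      = (SUP z. (f x + h x) + (ereal ((A *v x) \<bullet> z) - conj_fun g z))"
    by (simp add: lagrangian_eq minus_ereal_def add.assoc inner_commute)
  also have "\<dots> = (f x + h x) + conj_fun (conj_fun g) (A *v x)"
    using \<open>f x + h x \<noteq> -\<infinity>\<close> by (simp add: SUP_ereal_add_right conj_fun_def)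
  also have "\<dots> = primal_obj f g h A x"
    by (simp add: fenchel_moreau[OF assms(1-3)] primal_obj_def ac_simps)
  finally show ?thesis ..
qed

lemma INF_ereal_minus_left: "(INF i\<in>I. f i - c) = (INF i\<in>I. f i) - (c::ereal)"
proof (rule antisym)
  show "(INF i\<in>I. f i) - c \<le> (INF i\<in>I. f i - c)"
    by (intro INF_greatest ereal_minus_mono INF_lower order_refl)
  show "(INF i\<in>I. f i - c) \<le> (INF i\<in>I. f i) - c"
  proof (cases c)
    case (real r)
    have "(INF i\<in>I. f i - c) + c \<le> (INF i\<in>I. f i)"
    proof (rule INF_greatest)
      fix i assume "i \<in> I"
      then have "(INF i\<in>I. f i - c) + c \<le> (f i - c) + c" by (intro add_right_mono INF_lower)
      then show "(INF i\<in>I. f i - c) + c \<le> f i" using real by (cases "f i") auto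
    qed
    then show ?thesis using real by (simp add: ereal_le_minus)
  next
    case PInf
    show ?thesis
    proof (cases "(INF i\<in>I. f i) = \<infinity>")
      case False
      then obtain i where "i \<in> I" "f i \<noteq> \<infinity>"
        using INF_top_conv[of f I] by (auto simp: top_ereal_def)
      then have "(INF i\<in>I. f i - c) \<le> -\<infinity>"
        using PInf INF_lower[of i I "\<lambda>i. f i - c"] by (cases "f i") auto
      then show ?thesis by simp
    qed (simp add: PInf)
  qed (simp add: minus_ereal_def)
qed

lemma dual_obj_eq_INF_lagrangian:
  "dual_obj f g h A z = (INF x. lagrangian f g h A x z)"
proof -
  let ?q = "transpose A *v z"
  have "- (ereal (- ?q \<bullet> x) - (f x + h x)) = f x + h x + ereal (z \<bullet> (A *v x))" for x
    by (cases "f x"; cases "h x") (simp_all add: dot_lmul_matrix)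
  then have "lagrangian f g h A x z = - (ereal (- ?q \<bullet> x) - (f x + h x)) - conj_fun g z" for x
    by (simp add: lagrangian_eq)
  then have "(INF x. lagrangian f g h A x z)
      = (INF x. - (ereal (- ?q \<bullet> x) - (f x + h x))) - conj_fun g z"
    by (simp add: INF_ereal_minus_left)
  also have "\<dots> = dual_obj f g h A z"
    by (simp add: ereal_INF_uminus_eq conj_fun_def dual_obj_def)
  finally show ?thesis ..
qed

lemma convex_fun_lagrangian:
  assumes "convex_fun f" "convex_fun h"
  shows "convex_fun (\<lambda>x. lagrangian f g h A x z)"
proof -
  have eq: "lagrangian f g h A x z
      = (f x + h x) + (ereal ((transpose A *v z) \<bullet> x) + - conj_fun g z)" for x
    by (simp add: lagrangian_eq minus_ereal_def add.assoc dot_lmul_matrix)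
  show ?thesis
    unfolding eq by (rule convex_fun_add[OF convex_fun_add[OF assms] convex_fun_affine])
qed

lemma convex_fun_uminus_lagrangian:
  assumes "proper_fun (\<lambda>y. f y + h y)" "x \<in> edom (\<lambda>y. f y + h y)"
  shows "convex_fun (\<lambda>z. - lagrangian f g h A x z)"
proof -
  obtain c where c: "f x + h x = ereal c"
    using assms by (cases "f x + h x") (auto simp: edom_def proper_fun_def)
  have eq: "- lagrangian f g h A x z
      = conj_fun g z + (ereal ((- (A *v x)) \<bullet> z) + ereal (- c))" for z
    by (cases "conj_fun g z") (auto simp: lagrangian_eq c inner_commute)
  show ?thesis
    unfolding eq by (rule convex_fun_add[OF convex_fun_conj_fun convex_fun_affine])
qed

lemma lagrangian_saddle_point:
  assumes h: "convex_fun h" "\<And>y. h y \<noteq> -\<infinity>" "h x0 < \<infinity>"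
    and h_der: "((\<lambda>y. real_of_ereal (h y)) has_derivative (\<lambda>v. d \<bullet> v)) (at x0)"
    and f_sub: "- (transpose A *v z0) - d \<in> subdiff f x0"
    and g_sub: "A *v x0 \<in> subdiff (conj_fun g) z0"
  shows "lagrangian f g h A x0 z \<le> lagrangian f g h A x0 z0"
    and "lagrangian f g h A x0 z0 \<le> lagrangian f g h A x z0"
proof -
  have "f x0 + h x0 + (ereal (z \<bullet> (A *v x0)) - conj_fun g z)
      \<le> f x0 + h x0 + (ereal (z0 \<bullet> (A *v x0)) - conj_fun g z0)"
    using conj_fun_upper[of "A *v x0" z "conj_fun g"] conj_fun_subdiff_eq[OF g_sub]
    by (intro add_left_mono) (simp add: inner_commute)
  then show "lagrangian f g h A x0 z \<le> lagrangian f g h A x0 z0"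
    by (simp add: lagrangian_eq minus_ereal_def add.assoc)
  let ?q = "transpose A *v z0"
  have "- ?q - d + d \<in> subdiff (\<lambda>y. f y + h y) x0"
    by (rule subdiff_add[OF f_sub convex_fun_has_derivative_imp_subdiff[OF h h_der]])
  then have sub: "f x0 + h x0 + ereal (- ?q \<bullet> (x - x0)) \<le> f x + h x"
    and fin: "\<bar>f x0 + h x0\<bar> \<noteq> \<infinity>"
    by (simp_all add: subdiff_def)
  have "f x0 + h x0 + ereal (?q \<bullet> x0) = f x0 + h x0 + ereal (- ?q \<bullet> (x - x0)) + ereal (?q \<bullet> x)"
    using fin by (cases "f x0 + h x0") (auto simp: inner_diff_right)
  also have "\<dots> \<le> f x + h x + ereal (?q \<bullet> x)"
    using sub by (rule add_right_mono)
  finally show "lagrangian f g h A x0 z0 \<le> lagrangian f g h A x z0"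
    unfolding lagrangian_eq by (intro ereal_minus_mono) (simp_all add: dot_lmul_matrix)
qed

theorem mainTheorem1:
  fixes f h :: "real^'n \<Rightarrow> ereal" and g :: "real^'m \<Rightarrow> ereal"
    and A :: "real^'n^'m" and X :: "(real^'n) set" and Z :: "(real^'m) set"
    and xs :: "real^'n" and zs :: "real^'m"
  assumes f_cc: "closed_fun f" "convex_fun f"
    and g_cc: "closed_fun g" "convex_fun g"
    and h_cc: "closed_fun h" "convex_fun h"
    and h_dom: "open (edom h)" "convex (edom h)"
    and h_fin: "\<forall>x\<in>edom h. h x \<noteq> -\<infinity>"
    and h_diff: "\<forall>x\<in>edom h. (\<lambda>y. real_of_ereal (h y)) differentiable (at x)"
    and fh_proper: "proper_fun (\<lambda>x. f x + h x)"
    and g_proper: "proper_fun g"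
    and KKT: "\<exists>x z d. x \<in> edom h
                \<and> ((\<lambda>y. real_of_ereal (h y)) has_derivative (\<lambda>v. d \<bullet> v)) (at x)
                \<and> - (transpose A *v z) - d \<in> subdiff f x
                \<and> A *v x \<in> subdiff (conj_fun g) z"
    and X: "compact X" "convex X"
    and Z: "compact Z" "convex Z"
    and xs: "primal_optimal f g h A xs" "xs \<in> interior X"
    and zs: "dual_optimal f g h A zs" "zs \<in> interior Z"
  shows "\<forall>x \<in> edom (\<lambda>y. f y + h y). \<forall>z \<in> edom (conj_fun g).
           gap_eta f g h A X Z x z \<ge> 0
           \<and> (gap_eta f g h A X Z x z = 0 \<longrightarrow>
                primal_optimal f g h A x \<and> dual_optimal f g h A z)"
proof (intro ballI conjI impI)
  let ?L = "lagrangian f g h A"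
  have P: "primal_obj f g h A x = (SUP z. ?L x z)" for x
    by (rule primal_obj_eq_SUP_lagrangian[OF g_cc g_proper fh_proper])
  have D: "dual_obj f g h A z = (INF x. ?L x z)" for z
    by (rule dual_obj_eq_INF_lagrangian)
  obtain x0 z0 d where x0: "h x0 < \<infinity>"
    and h_der: "((\<lambda>y. real_of_ereal (h y)) has_derivative (\<lambda>v. d \<bullet> v)) (at x0)"
    and f_sub: "- (transpose A *v z0) - d \<in> subdiff f x0"
    and g_sub: "A *v x0 \<in> subdiff (conj_fun g) z0"
    using KKT by (auto simp: edom_def)
  have "h y \<noteq> -\<infinity>" for y
    using h_fin by (cases "y \<in> edom h") (auto simp: edom_def)
  note saddle = lagrangian_saddle_point[OF h_cc(2) this x0 h_der f_sub g_sub]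
  have strong: "(SUP z. ?L xs z) \<le> (INF x. ?L x zs)"
    using xs(1) zs(1) by (intro saddle_point_strong_duality[of ?L x0 z0] saddle)
      (auto simp: primal_optimal_def dual_optimal_def P D)
  fix x z assume x: "x \<in> edom (\<lambda>y. f y + h y)"
  have "xs \<in> X" "zs \<in> Z" using xs(2) zs(2) interior_subset by blast+
  then show "0 \<le> gap_eta f g h A X Z x z"
    unfolding gap_eta_def by (rule minimax_gap_nonneg[OF strong])
  assume "gap_eta f g h A X Z x z = 0"
  note opt = minimax_gap_zero_imp_optimal[OF strong xs(2) zs(2)
      convex_fun_lagrangian[OF f_cc(2) h_cc(2)] convex_fun_uminus_lagrangian[OF fh_proper x]
      this[unfolded gap_eta_def]]
  show "primal_optimal f g h A x"
    using xs(1) opt(1) unfolding primal_optimal_def P by (blast intro: order_trans le_less_trans)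
  show "dual_optimal f g h A z"
    using zs(1) opt(2) unfolding dual_optimal_def D by (blast intro: order_trans less_le_trans)
qed

end
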